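(* Let $\epsilon\in(0,1)$, $u_0\in\mathbb{R}$, $h>0$, and let $(u_n)_{n\ge0}$ be a sequence of real numbers starting at $u_0$ and satisfying the modified Crank–Nicolson scheme $$\frac{u_n-u_{n-1}}{h}+\frac{1}{\epsilon^2}\,\frac{u_n+u_{n-1}}{2}\left(\frac{u_n^2+u_{n-1}^2}{2}-1\right)=0,\qquad n\ge1.$$ (i) If $u_0\in\{0,1,-1\}$ and $h\le2\epsilon^2$, then $u_n=\mathrm{sign}(u_0)$ for all $n\ge1$. (ii) If $u_0\notin\{0,1,-1\}$, define $h^*=h^*(u_0,\epsilon)=\frac{4\epsilon^2}{u_0^2+2|u_0|+1}$ if $|u_0|>1$ and $h^*=\epsilon^2$ if $0<|u_0|<1$. Then $h^*>0$ and for every $h\in(0,h^*]$ the sequence $(u_n)$ is monotone and converges to $\mathrm{sign}(u_0)$ as $n\to\infty$.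
   Context: The scheme discretizes the ODE $u'(t)+\frac{1}{\epsilon^2}(u^3-u)=0$, $u(0)=u_0$; equivalently the nonlinear term is $\frac{F(u_n)-F(u_{n-1})}{u_n-u_{n-1}}$ with $F(u)=\frac14(u^2-1)^2$. For $h\le2\epsilon^2$ each step equation has a unique real solution. Here $\mathrm{sign}(0)=0$. *)

theory Defs
  imports Complex_Main
begin

definition mcn_step :: "real \<Rightarrow> real \<Rightarrow> real \<Rightarrow> real \<Rightarrow> bool" where
  "mcn_step eps h w v \<longleftrightarrow>
     (v - w) / h + (1 / eps^2) * ((v + w) / 2) * ((v^2 + w^2) / 2 - 1) = 0"

definition hstar :: "real \<Rightarrow> real \<Rightarrow> real" where
  "hstar u0 eps = (if \<bar>u0\<bar> > 1 then 4 * eps^2 / (u0^2 + 2 * \<bar>u0\<bar> + 1) else eps^2)"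

end

theory Submission
  imports Defs
begin

text \<open>Multiplied by \<open>h\<close>, a step of the scheme reads \<open>R\<^sub>k(u\<^sub>n\<^sub>-\<^sub>1, u\<^sub>n) = 0\<close> with \<open>k = h/\<epsilon>\<^sup>2\<close>, where
  \<open>R\<^sub>k(w, v) = v - w + k/4 (v + w)(v\<^sup>2 + w\<^sup>2 - 2)\<close>. For \<open>k \<le> 2\<close> the residual is strictly increasing
  in the new iterate \<open>v\<close>, so \<open>u\<^sub>n\<close> is located by the signs of \<open>R\<^sub>k(u\<^sub>n\<^sub>-\<^sub>1, \<cdot>)\<close> at \<open>u\<^sub>n\<^sub>-\<^sub>1\<close> and at \<open>1\<close>.
  Under \<open>h \<le> h\<^sup>*\<close> this traps the orbit of a positive \<open>u\<^sub>0\<close> in \<open>(0, 1)\<close>, where it increases, or in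
  \<open>[1, u\<^sub>0]\<close>, where it decreases; its limit is then a positive fixed point of the scheme, i.e. \<open>1\<close>.
  Negative data follow from the odd symmetry of \<open>R\<^sub>k\<close>, and the fixed points \<open>0, \<plusminus>1\<close> persist
  because the step has a unique solution.\<close>

definition mcn_residual :: "real \<Rightarrow> real \<Rightarrow> real \<Rightarrow> real" where
  "mcn_residual k w v = v - w + k/4 * (v + w) * (v^2 + w^2 - 2)"

lemma mcn_step_iff_residual:
  assumes "0 < h" "0 < eps"
  shows "mcn_step eps h w v \<longleftrightarrow> mcn_residual (h / eps^2) w v = 0"
proof -
  have "(v - w) / h + (1 / eps^2) * ((v + w) / 2) * ((v^2 + w^2) / 2 - 1)
        = mcn_residual (h / eps^2) w v / h"
    using assms unfolding mcn_residual_def by (simp add: field_simps power2_eq_square)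
  then show ?thesis using assms unfolding mcn_step_def by simp
qed

lemma mcn_residual_diff:
  "mcn_residual k w b - mcn_residual k w a
     = (b - a) * ((1 - k/2) + k/4 * (a^2 + a*b + b^2 + w*(a + b) + w^2))"
  unfolding mcn_residual_def by (simp add: power2_eq_square field_simps)

lemma strict_mono_mcn_residual:
  assumes "0 \<le> k" "k \<le> 2"
  shows "strict_mono (mcn_residual k w)"
proof (rule strict_monoI)
  fix a b :: real
  assume "a < b"
  define Q where "Q = a^2 + a*b + b^2 + w*(a + b) + w^2"
  have "Q = (w + (a + b)/2)^2 + (a + b)^2/2 + (b - a)^2/4"
    unfolding Q_def by (simp add: power2_eq_square field_simps)
  moreover have "(b - a)^2 > 0" using \<open>a < b\<close> by simp
  moreover have "(w + (a + b)/2)^2 \<ge> 0" "(a + b)^2 \<ge> 0" by simp_all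
  ultimately have "Q > 0" by linarith
  then have "(1 - k/2) + k/4 * Q > 0"
    using assms by (cases "k = 0") (auto intro: add_nonneg_pos)
  then have "mcn_residual k w b - mcn_residual k w a > 0"
    unfolding mcn_residual_diff Q_def[symmetric] using \<open>a < b\<close> by simp
  then show "mcn_residual k w a < mcn_residual k w b" by simp
qed

lemma mcn_residual_diag: "mcn_residual k w w = k * w * (w^2 - 1)"
  unfolding mcn_residual_def by (simp add: power2_eq_square algebra_simps)

lemma mcn_residual_at_one: "mcn_residual k w 1 = (1 - w) * (1 - k/4 * (1 + w)^2)"
  unfolding mcn_residual_def by (simp add: power2_eq_square field_simps)

lemma mcn_residual_minus: "mcn_residual k (- w) (- v) = - mcn_residual k w v"
  unfolding mcn_residual_def by (simp add: power2_eq_square field_simps)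

lemma mcn_residual_fixed_point:
  assumes "0 \<le> k" "k \<le> 2" "w \<in> {0, 1, -1}" "mcn_residual k w v = 0"
  shows "v = w"
proof -
  have "mcn_residual k w w = 0" using assms(3) unfolding mcn_residual_diag by auto
  then show ?thesis
    using assms(4) strict_mono_eq[OF strict_mono_mcn_residual[OF assms(1,2)]] by metis
qed

lemma mcn_orbit_stationary:
  assumes "0 \<le> k" "k \<le> 2" "u 0 \<in> {0, 1, -1}"
    and step: "\<And>n. mcn_residual k (u n) (u (Suc n)) = 0"
  shows "u n = u 0"
proof (induction n)
  case (Suc n)
  then show ?case using mcn_residual_fixed_point[OF assms(1,2) _ step[of n]] assms(3) by simp
qed simp

lemma mcn_limit_fixed_point:
  assumes "\<And>n. mcn_residual k (u n) (u (Suc n)) = 0" "u \<longlonglongrightarrow> L"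
  shows "mcn_residual k L L = 0"
proof -
  have "(\<lambda>n. mcn_residual k (u n) (u (Suc n))) \<longlonglongrightarrow> mcn_residual k L L"
    unfolding mcn_residual_def using assms(2) LIMSEQ_Suc[OF assms(2)] by (intro tendsto_intros)
  then have "(\<lambda>n. 0) \<longlonglongrightarrow> mcn_residual k L L" using assms(1) by simp
  then show ?thesis by (simp add: LIMSEQ_const_iff)
qed

lemma mcn_limit_pos_eq_one:
  assumes "0 < k" "\<And>n. mcn_residual k (u n) (u (Suc n)) = 0" "u \<longlonglongrightarrow> L" "0 < L"
  shows "L = 1"
  using mcn_limit_fixed_point[OF assms(2,3)] assms(1,4)
  by (simp add: mcn_residual_diag power2_eq_1_iff)

lemma mcn_step_in_unit_interval:
  assumes "0 < k" "k \<le> 1" "0 < w" "w < 1" "mcn_residual k w v = 0"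
  shows "w \<le> v \<and> v < 1"
proof -
  have "(1 + w)^2 < 2^2" using assms by (intro power_strict_mono) auto
  moreover have "k * (1 + w)^2 \<le> (1 + w)^2" using assms by (simp add: mult_left_le_one_le)
  ultimately have "k/4 * (1 + w)^2 < 1" by simp
  then have "mcn_residual k w 1 > 0"
    unfolding mcn_residual_at_one using assms by simp
  moreover have "mcn_residual k w w \<le> 0"
    unfolding mcn_residual_diag using assms
    by (intro mult_nonneg_nonpos) (auto simp: power_le_one)
  ultimately have "mcn_residual k w w \<le> mcn_residual k w v" "mcn_residual k w v < mcn_residual k w 1"
    using assms(5) by simp_all
  moreover have "strict_mono (mcn_residual k w)" using assms by (simp add: strict_mono_mcn_residual)
  ultimately show ?thesis by (simp add: strict_mono_less_eq strict_mono_less)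
qed

lemma mcn_step_above_one:
  assumes "0 < k" "k * (1 + M)^2 \<le> 4" "1 \<le> w" "w \<le> M" "mcn_residual k w v = 0"
  shows "1 \<le> v \<and> v \<le> w"
proof -
  have "(1 + w)^2 \<le> (1 + M)^2" "2^2 \<le> (1 + w)^2"
    using assms power_mono[of "1 + w" "1 + M" 2] power_mono[of 2 "1 + w" 2] by simp_all
  then have "k * (1 + w)^2 \<le> k * (1 + M)^2" "k * 4 \<le> k * (1 + w)^2"
    using assms(1) by (simp_all add: mult_left_mono)
  then have bound: "k * (1 + w)^2 \<le> 4" using assms(2) by linarith
  with \<open>k * 4 \<le> k * (1 + w)^2\<close> have "k \<le> 1" by linarith
  have "mcn_residual k w 1 \<le> 0"
    unfolding mcn_residual_at_one using assms bound by (auto intro: mult_nonpos_nonneg)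
  moreover have "mcn_residual k w w \<ge> 0"
    unfolding mcn_residual_diag using assms by (auto simp: one_le_power)
  moreover have "strict_mono (mcn_residual k w)"
    using \<open>k \<le> 1\<close> assms by (simp add: strict_mono_mcn_residual)
  ultimately show ?thesis using assms(5) strict_mono_less_eq[of "mcn_residual k w"] by metis
qed

lemma mcn_orbit_from_unit_interval:
  assumes "0 < k" "k \<le> 1" "0 < u 0" "u 0 < 1"
    and step: "\<And>n. mcn_residual k (u n) (u (Suc n)) = 0"
  shows "mono u \<and> u \<longlonglongrightarrow> 1"
proof -
  have bounds: "0 < u n \<and> u n < 1" for n
  proof (induction n)
    case 0 then show ?case using assms by simp
  next
    case (Suc n) then show ?case using mcn_step_in_unit_interval[OF assms(1,2) _ _ step] by force
  qed
  have "mono u"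
    using bounds mcn_step_in_unit_interval[OF assms(1,2) _ _ step] by (simp add: incseq_SucI)
  then obtain L where "u \<longlonglongrightarrow> L" "\<And>n. u n \<le> L"
    using incseq_convergent[of u 1] bounds less_imp_le by blast
  moreover have "0 < L" using \<open>\<And>n. u n \<le> L\<close>[of 0] assms by simp
  ultimately show ?thesis using \<open>mono u\<close> mcn_limit_pos_eq_one[where u = u, OF assms(1) step] by blast
qed

lemma mcn_orbit_from_above_one:
  assumes "0 < k" "k * (1 + u 0)^2 \<le> 4" "1 < u 0"
    and step: "\<And>n. mcn_residual k (u n) (u (Suc n)) = 0"
  shows "antimono u \<and> u \<longlonglongrightarrow> 1"
proof -
  have bounds: "1 \<le> u n \<and> u n \<le> u 0" for n
  proof (induction n)
    case 0 then show ?case using assms by simp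
  next
    case (Suc n) then show ?case using mcn_step_above_one[OF assms(1,2) _ _ step] by force
  qed
  have "antimono u"
    using bounds mcn_step_above_one[OF assms(1,2) _ _ step] by (simp add: decseq_SucI)
  then obtain L where "u \<longlonglongrightarrow> L" "\<And>n. L \<le> u n"
    using decseq_convergent[of u 1] bounds by blast
  moreover have "1 \<le> L" using \<open>u \<longlonglongrightarrow> L\<close> bounds by (intro LIMSEQ_le_const[of u]) auto
  ultimately have "L = 1" using mcn_limit_pos_eq_one[where u = u, OF assms(1) step] by simp
  then show ?thesis using \<open>antimono u\<close> \<open>u \<longlonglongrightarrow> L\<close> by simp
qed

lemma mcn_orbit_monotone_tendsto_sgn:
  assumes "0 < k" "u 0 \<notin> {0, 1, -1}"
    and large: "1 < \<bar>u 0\<bar> \<Longrightarrow> k * (1 + \<bar>u 0\<bar>)^2 \<le> 4"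
    and small: "\<bar>u 0\<bar> < 1 \<Longrightarrow> k \<le> 1"
    and step: "\<And>n. mcn_residual k (u n) (u (Suc n)) = 0"
  shows "(mono u \<or> antimono u) \<and> u \<longlonglongrightarrow> sgn (u 0)"
proof -
  have pos: "(mono v \<or> antimono v) \<and> v \<longlonglongrightarrow> 1"
    if "v 0 = \<bar>u 0\<bar>" "\<And>n. mcn_residual k (v n) (v (Suc n)) = 0" for v
  proof (cases "1 < \<bar>u 0\<bar>")
    case True then show ?thesis using mcn_orbit_from_above_one[OF assms(1)] large that by simp
  next
    case False
    then have "\<bar>u 0\<bar> < 1" using assms(2) by auto
    then show ?thesis using mcn_orbit_from_unit_interval[OF assms(1)] small assms(2) that by auto
  qed
  show ?thesis
  proof (cases "0 < u 0")
    case True then show ?thesis using pos[of u] step by simp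
  next
    case False
    then have "u 0 < 0" using assms(2) by auto
    have "(mono (\<lambda>n. - u n) \<or> antimono (\<lambda>n. - u n)) \<and> (\<lambda>n. - u n) \<longlonglongrightarrow> 1"
      using pos[of "\<lambda>n. - u n"] step \<open>u 0 < 0\<close> by (simp add: mcn_residual_minus)
    then have "(mono u \<or> antimono u) \<and> u \<longlonglongrightarrow> -1"
      unfolding monotone_def using tendsto_minus[of "\<lambda>n. - u n" 1] by auto
    then show ?thesis using \<open>u 0 < 0\<close> by simp
  qed
qed

lemma hstar_pos: "0 < eps \<Longrightarrow> 0 < hstar u0 eps"
  unfolding hstar_def by (simp add: add_nonneg_pos)

lemma le_hstar_above_one:
  assumes "0 < eps" "1 < \<bar>u0\<bar>" "h \<le> hstar u0 eps"
  shows "h / eps^2 * (1 + \<bar>u0\<bar>)^2 \<le> 4"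
proof -
  have "(1 + \<bar>u0\<bar>)^2 = u0^2 + 2 * \<bar>u0\<bar> + 1" by (simp add: power2_eq_square algebra_simps)
  moreover have "h \<le> 4 * eps^2 / (u0^2 + 2 * \<bar>u0\<bar> + 1)" using assms unfolding hstar_def by simp
  ultimately show ?thesis using assms by (simp add: field_simps add_nonneg_pos)
qed

lemma le_hstar_below_one:
  assumes "0 < eps" "\<bar>u0\<bar> < 1" "h \<le> hstar u0 eps"
  shows "h / eps^2 \<le> 1"
  using assms unfolding hstar_def by simp

theorem theorem3p5:
  fixes eps u0 h :: real and u :: "nat \<Rightarrow> real"
  assumes eps: "0 < eps" "eps < 1"
    and h: "0 < h"
    and init: "u 0 = u0"
    and scheme: "\<And>n. n \<ge> 1 \<Longrightarrow> mcn_step eps h (u (n - 1)) (u n)"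
  shows "(u0 \<in> {0, 1, -1} \<and> h \<le> 2 * eps^2 \<longrightarrow> (\<forall>n\<ge>1. u n = sgn u0)) \<and>
         (u0 \<notin> {0, 1, -1} \<longrightarrow>
           hstar u0 eps > 0 \<and>
           (h \<le> hstar u0 eps \<longrightarrow> (mono u \<or> antimono u) \<and> u \<longlonglongrightarrow> sgn u0))"
proof -
  define k where "k = h / eps^2"
  have "0 < k" unfolding k_def using h eps by simp
  have step: "mcn_residual k (u n) (u (Suc n)) = 0" for n
    using scheme[of "Suc n"] mcn_step_iff_residual[OF h eps(1)] unfolding k_def by simp
  have "\<forall>n\<ge>1. u n = sgn u0" if "u0 \<in> {0, 1, -1}" "h \<le> 2 * eps^2"
  proof -
    have "k \<le> 2" unfolding k_def using that eps by (simp add: pos_divide_le_eq)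
    then show ?thesis
      using mcn_orbit_stationary[where u = u, OF _ _ _ step] \<open>0 < k\<close> that(1) init by auto
  qed
  moreover have "(mono u \<or> antimono u) \<and> u \<longlonglongrightarrow> sgn u0"
    if "u0 \<notin> {0, 1, -1}" "h \<le> hstar u0 eps"
    using mcn_orbit_monotone_tendsto_sgn[where u = u, OF \<open>0 < k\<close> _ _ _ step] that init
      le_hstar_above_one[OF eps(1) _ that(2)] le_hstar_below_one[OF eps(1) _ that(2)]
    unfolding k_def by simp
  ultimately show ?thesis using hstar_pos[OF eps(1)] by blast
qed

end
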